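(* Let $n\ge2$, let $\psi:\mathbb R\to(0,\infty)$ be continuous and even with $\int_{\mathbb R}\psi=+\infty$, $\Psi(x)=\int_0^x\psi$, $J=\psi\circ\Psi^{-1}$ convex, let $\rho:\mathbb R^{n-1}\to(0,\infty)$ be continuous and $d\mu=\psi(x_1)\rho(x')\,dx$. If $M,N\subset\mathbb R^n$ are open sets with $M\subset N$, then $$\operatorname{dist}\{M;\partial N\}\le\operatorname{dist}\{M^*;\partial N^*\},$$ where $^*$ denotes Steiner $\mu$-symmetrization.
   Context: For $A\subset\mathbb R$ open, $A^*=(-c,c)$ with $\int_{-c}^c\psi=\int_A\psi$ if this is finite, $A^*=\mathbb R$ otherwise; for $M\subset\mathbb R^n$, $M^*=\{(x_1,x'):x_1\in(M(x'))^*\}$ where $M(x')=\{x_1:(x_1,x')\in M\}$ (defined pointwise for open sets, so $M^*$ is open). *)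

theory Defs
  imports "HOL-Analysis.Analysis"
begin

definition sym1 :: "(real \<Rightarrow> real) \<Rightarrow> real set \<Rightarrow> real set" where
  "sym1 \<psi> A =
     (if (\<integral>\<^sup>+ x\<in>A. ennreal (\<psi> x) \<partial>lborel) = \<infinity> then UNIV
      else (let c = (THE c. c \<ge> 0 \<and>
                   (\<integral>\<^sup>+ x\<in>{-c<..<c}. ennreal (\<psi> x) \<partial>lborel) = (\<integral>\<^sup>+ x\<in>A. ennreal (\<psi> x) \<partial>lborel))
            in {-c<..<c}))"

text \<open>Steiner symmetrization in the first coordinate of R^n = R x R^(n-1).\<close>
definition steiner_sym :: "(real \<Rightarrow> real) \<Rightarrow> (real \<times> 'a) set \<Rightarrow> (real \<times> 'a) set" where
  "steiner_sym \<psi> M = {(x1, x'). x1 \<in> sym1 \<psi> {t. (t, x') \<in> M}}"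

text \<open>Distance between two sets, with value +infinity if one of them is empty.\<close>
definition set_dist_ext :: "'a::metric_space set \<Rightarrow> 'a set \<Rightarrow> ereal" where
  "set_dist_ext A B = (INF x\<in>A. INF y\<in>B. ereal (dist x y))"

end

theory Submission
  imports Defs
begin

text \<open>
  If every ball of radius \<open>d\<close> centred in \<open>M\<close> lies in \<open>N\<close>, the same holds for \<open>M\<^sup>*\<close> and \<open>N\<^sup>*\<close>.
  Two points at horizontal distance \<open>h < d\<close> see each other along the \<open>x\<^sub>1\<close>-axis within
  \<open>r = \<surd>(d\<^sup>2 - h\<^sup>2)\<close>, so the \<open>r\<close>-thickening of a slice of \<open>M\<close> lies in a slice of \<open>N\<close>, and the claim
  reduces to a one-dimensional isoperimetric statement: if \<open>A\<close> has \<open>\<psi>\<close>-measure \<open>2\<Psi>(c)\<close>, its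
  \<open>r\<close>-thickening has measure at least \<open>2\<Psi>(c + r)\<close>. For \<open>A \<subseteq> [a,b]\<close> the thickening gains the
  end intervals \<open>(a - r, a)\<close> and \<open>(b, b + r)\<close>; convexity of \<open>J = \<psi> \<circ> \<Psi>\<^sup>-\<^sup>1\<close> makes
  \<open>s \<mapsto> \<Psi>\<^sup>-\<^sup>1((\<Psi>(b + s) - \<Psi>(a - s))/2) - s\<close> nondecreasing and, with evenness, \<open>\<psi>\<close> nondecreasing
  on \<open>[0,\<infinity>)\<close>, which together bound this gain by \<open>2(\<Psi>(c + r) - \<Psi>(c))\<close>.
\<close>

lemma emeasure_Int_Icc_exceeds:
  fixes M :: "real measure"
  assumes sets_M: "sets M = sets borel" and A: "A \<in> sets borel" and less: "v < emeasure M A"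
  shows "\<exists>n::nat. v < emeasure M (A \<inter> {-real n..real n})"
proof -
  have "(\<Union>n::nat. A \<inter> {-real n..real n}) = A"
  proof (intro antisym subsetI)
    fix x assume "x \<in> A"
    moreover obtain n :: nat where "\<bar>x\<bar> \<le> real n" using real_arch_simple by blast
    ultimately show "x \<in> (\<Union>n::nat. A \<inter> {-real n..real n})"
      by (auto simp: abs_le_iff intro!: exI[of _ n])
  qed auto
  then have "(SUP n::nat. emeasure M (A \<inter> {-real n..real n})) = emeasure M A"
    using A sets_M by (subst SUP_emeasure_incseq) (auto intro!: incseq_SucI)
  with less have "v < (SUP n::nat. emeasure M (A \<inter> {-real n..real n}))" by simp
  then show ?thesis by (auto simp: less_SUP_iff)
qed

lemma thickening_contains_end_intervals:
  fixes A B :: "real set"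
  assumes ne: "A \<noteq> {}" and bdd: "bdd_below A" "bdd_above A"
    and thick: "\<And>t s. t \<in> A \<Longrightarrow> \<bar>s - t\<bar> < r \<Longrightarrow> s \<in> B"
  shows "{Inf A - r<..<Inf A} \<subseteq> B" and "{Sup A<..<Sup A + r} \<subseteq> B"
proof
  fix s assume s: "s \<in> {Inf A - r<..<Inf A}"
  then have "Inf A < s + r" by simp
  then obtain t where "t \<in> A" "t < s + r" using cInf_less_iff[OF ne bdd(1)] by blast
  with s show "s \<in> B" using thick cInf_lower[OF _ bdd(1)] by fastforce
next
  show "{Sup A<..<Sup A + r} \<subseteq> B"
  proof
    fix s assume s: "s \<in> {Sup A<..<Sup A + r}"
    then have "s - r < Sup A" by simp
    then obtain t where "t \<in> A" "s - r < t" using less_cSup_iff[OF ne bdd(2)] by blast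
    with s show "s \<in> B" using thick cSup_upper[OF _ bdd(2)] by fastforce
  qed
qed

lemma ball_subset_if_less_set_dist_frontier:
  fixes M N :: "'b::real_normed_vector set"
  assumes "M \<subseteq> N" and d: "ereal d < set_dist_ext M (frontier N)" and m: "m \<in> M"
  shows "ball m d \<subseteq> N"
proof
  fix y assume y: "y \<in> ball m d"
  show "y \<in> N"
  proof (rule ccontr)
    assume "y \<notin> N"
    then have "closed_segment m y \<inter> frontier N \<noteq> {}"
      using m \<open>M \<subseteq> N\<close> by (intro connected_Int_frontier) auto
    then obtain z where z: "z \<in> closed_segment m y" "z \<in> frontier N" by blast
    have "set_dist_ext M (frontier N) \<le> ereal (dist m z)"
      unfolding set_dist_ext_def by (rule INF_lower2[OF m], rule INF_lower[OF z(2)])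
    with d have "ereal d < ereal (dist m z)" by (rule order_less_le_trans)
    moreover have "dist m z \<le> dist m y"
      using segment_bound1[OF z(1)] by (simp add: dist_norm norm_minus_commute)
    ultimately show False using y by simp
  qed
qed

lemma set_dist_ext_frontier_ge:
  fixes M N :: "'b::metric_space set"
  assumes balls: "\<And>d p. ereal d < L \<Longrightarrow> p \<in> M \<Longrightarrow> ball p d \<subseteq> N"
  shows "L \<le> set_dist_ext M (frontier N)"
  unfolding set_dist_ext_def
proof (intro INF_greatest)
  fix p q assume p: "p \<in> M" and q: "q \<in> frontier N"
  show "L \<le> ereal (dist p q)"
  proof (rule ccontr)
    assume "\<not> L \<le> ereal (dist p q)"
    then have "ereal (dist p q) < L" by simp
    then obtain d where "ereal (dist p q) < ereal d" "ereal d < L"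
      using ereal_dense2 by blast
    then have d: "dist p q < d" "ereal d < L" by simp_all
    then have "ball p d \<subseteq> interior N" using balls[OF d(2) p] by (simp add: interior_maximal)
    with d(1) q show False by (auto simp: frontier_def)
  qed
qed

lemma open_slice:
  fixes M :: "(real \<times> 'b::topological_space) set"
  assumes "open M" shows "open {t. (t, x') \<in> M}"
  using continuous_open_vimage[OF assms, of "\<lambda>t. (t, x')"] by (simp add: vimage_def)

locale symmetrization_weight =
  fixes \<psi> :: "real \<Rightarrow> real"
  assumes psi_cont: "continuous_on UNIV \<psi>" and psi_pos: "\<And>x. \<psi> x > 0"
    and psi_even: "\<And>x. \<psi> (- x) = \<psi> x"
    and convex_psi_inv_integral: "convex_on UNIV (\<psi> \<circ> inv (\<lambda>x. LBINT t=0..x. \<psi> t))"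
begin

definition Psi :: "real \<Rightarrow> real" where "Psi x = (LBINT t=0..x. \<psi> t)"
definition J :: "real \<Rightarrow> real" where "J = \<psi> \<circ> inv Psi"

lemma J_convex: "convex_on UNIV J"
proof -
  have "(\<lambda>x. LBINT t=0..x. \<psi> t) = Psi" by (simp add: Psi_def fun_eq_iff)
  then show ?thesis using convex_psi_inv_integral by (simp add: J_def)
qed

lemma Psi_has_derivative: "(Psi has_real_derivative \<psi> x) (at x)"
proof -
  have "(Psi has_vector_derivative \<psi> x) (at x within {-\<bar>x\<bar>-1..\<bar>x\<bar>+1})"
    unfolding Psi_def[abs_def] zero_ereal_def
    by (rule interval_integral_FTC2) (auto intro: continuous_on_subset[OF psi_cont])
  moreover have "at x within {-\<bar>x\<bar>-1..\<bar>x\<bar>+1} = at x" by (rule at_within_Icc_at) auto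
  ultimately show ?thesis by (simp add: has_real_derivative_iff_has_vector_derivative)
qed

lemma Psi_add_has_derivative: "((\<lambda>s. Psi (a + s)) has_real_derivative \<psi> (a + s)) (at s)"
  using DERIV_chain2[OF Psi_has_derivative DERIV_add[OF DERIV_const DERIV_ident]] by simp

lemma Psi_diff_has_derivative: "((\<lambda>s. Psi (a - s)) has_real_derivative - \<psi> (a - s)) (at s)"
  using DERIV_chain2[OF Psi_has_derivative DERIV_diff[OF DERIV_const DERIV_ident]] by simp

lemma Psi_0 [simp]: "Psi 0 = 0" by (simp add: Psi_def zero_ereal_def)

lemma continuous_on_Psi: "continuous_on S Psi"
  using Psi_has_derivative by (meson DERIV_isCont continuous_at_imp_continuous_on)

lemma Psi_less_iff [simp]: "Psi x < Psi y \<longleftrightarrow> x < y"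
proof -
  have "Psi x < Psi y" if "x < y" for x y
    using that by (rule DERIV_pos_imp_increasing) (use Psi_has_derivative psi_pos in blast)
  then show ?thesis by (metis not_less_iff_gr_or_eq)
qed

lemma Psi_le_iff [simp]: "Psi x \<le> Psi y \<longleftrightarrow> x \<le> y"
  by (meson Psi_less_iff not_le)

lemma Psi_eq_iff [simp]: "Psi x = Psi y \<longleftrightarrow> x = y"
  by (metis Psi_le_iff order_antisym order_refl)

lemma Psi_nonneg: "0 \<le> c \<Longrightarrow> 0 \<le> Psi c"
  using Psi_le_iff[of 0 c] by simp

lemma Psi_minus: "Psi (- x) = - Psi x"
proof -
  have "((\<lambda>x. Psi x + Psi (-x)) has_real_derivative 0) (at y)" for y
    using DERIV_add[OF Psi_has_derivative Psi_diff_has_derivative[of 0 y]]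
    by (simp add: psi_even)
  from DERIV_isconst_all[OF allI[OF this], of x 0] show ?thesis by simp
qed

lemma J_Psi: "J (Psi x) = \<psi> x"
  by (simp add: J_def inv_f_f inj_on_def)

lemma J_minus_Psi: "J (- Psi x) = \<psi> x"
  by (metis J_Psi Psi_minus psi_even)

lemma J_midpoint: "J ((u + v) / 2) \<le> (J u + J v) / 2"
  using convex_onD[OF J_convex, of "1/2" u v] by (simp add: field_simps)

text \<open>\<open>\<Psi>(x)\<close> is a convex combination of \<open>\<Psi>(-y) = -\<Psi>(y)\<close> and \<open>\<Psi>(y)\<close>, where \<open>J\<close> takes the value \<open>\<psi>(y)\<close>.\<close>

lemma psi_mono_nonneg:
  assumes "0 \<le> x" "x \<le> y" shows "\<psi> x \<le> \<psi> y"
proof (cases "x = y")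
  case False
  define u v where "u = Psi x" and "v = Psi y"
  have "0 \<le> u" "u < v" using assms False Psi_nonneg by (auto simp: u_def v_def)
  define t where "t = (v + u) / (2 * v)"
  have t: "0 \<le> t" "t \<le> 1" "(1 - t) *\<^sub>R (- v) + t *\<^sub>R v = u"
    using \<open>0 \<le> u\<close> \<open>u < v\<close> by (auto simp: t_def field_simps)
  have "J ((1 - t) *\<^sub>R (- v) + t *\<^sub>R v) \<le> (1 - t) * J (- v) + t * J v"
    using t by (intro convex_onD[OF J_convex]) auto
  also have "\<dots> = \<psi> y" unfolding v_def J_minus_Psi J_Psi by (simp add: algebra_simps)
  finally show ?thesis using t by (simp add: u_def J_Psi)
qed simp

lemma psi_ge_psi_0: "\<psi> 0 \<le> \<psi> x"
  using psi_mono_nonneg[of 0 x] psi_mono_nonneg[of 0 "-x"] psi_even[of x] by (cases "x \<ge> 0") auto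

lemma Psi_ge_linear:
  assumes "x \<ge> 0" shows "\<psi> 0 * x \<le> Psi x"
proof -
  have "(\<lambda>x. Psi x - \<psi> 0 * x) 0 \<le> (\<lambda>x. Psi x - \<psi> 0 * x) x"
  proof (rule DERIV_nonneg_imp_increasing_open[OF assms])
    fix z show "\<exists>y. ((\<lambda>x. Psi x - \<psi> 0 * x) has_real_derivative y) (at z) \<and> 0 \<le> y"
      by (rule exI[of _ "\<psi> z - \<psi> 0 * 1"])
        (auto intro!: derivative_eq_intros Psi_has_derivative psi_ge_psi_0)
  qed (intro continuous_intros continuous_on_Psi)
  then show ?thesis by simp
qed

lemma surj_Psi: "surj Psi"
proof -
  have nonneg: "y \<in> range Psi" if "y \<ge> 0" for y
  proof -
    have "Psi 0 \<le> y" "0 \<le> y / \<psi> 0" "y \<le> Psi (y / \<psi> 0)"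
      using that psi_pos[of 0] Psi_ge_linear[of "y / \<psi> 0"] by auto
    then obtain x where "Psi x = y"
      using IVT[of Psi 0 y "y / \<psi> 0"] DERIV_isCont[OF Psi_has_derivative] by blast
    then show ?thesis by (metis rangeI)
  qed
  have "y \<in> range Psi" for y
  proof (cases "y \<ge> 0")
    case False
    then obtain x where "Psi x = - y" using nonneg[of "- y"] by auto
    then have "Psi (- x) = y" by (simp add: Psi_minus)
    then show ?thesis by (metis rangeI)
  qed (use nonneg in blast)
  then show ?thesis by auto
qed

definition Pinv :: "real \<Rightarrow> real" where "Pinv = inv Psi"

lemma Psi_Pinv [simp]: "Psi (Pinv y) = y" by (simp add: Pinv_def surj_f_inv_f[OF surj_Psi])

lemma Pinv_has_derivative: "(Pinv has_real_derivative inverse (\<psi> (Pinv y))) (at y)"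
proof (rule DERIV_inverse_function[where f=Psi and a="y-1" and b="y+1"])
  have "isCont Pinv (Psi (Pinv y))"
    by (rule isCont_inverse_function[where d=1])
      (auto intro: DERIV_isCont[OF Psi_has_derivative] simp: Pinv_def inv_f_f inj_on_def)
  then show "isCont Pinv y" by simp
  show "\<psi> (Pinv y) \<noteq> 0" using psi_pos[of "Pinv y"] by simp
qed (auto intro: Psi_has_derivative)

lemma Psi_spread_ge:
  assumes "r \<ge> 0"
  shows "2 * Psi (Pinv ((Psi b - Psi a) / 2) + r) \<le> Psi (b + r) - Psi (a - r)"
proof -
  define \<sigma> where "\<sigma> s = Pinv ((Psi (b + s) - Psi (a - s)) / 2)" for s
  have dm: "((\<lambda>s. (Psi (b + s) - Psi (a - s)) / 2) has_real_derivative
      (\<psi> (b + s) + \<psi> (a - s)) / 2) (at s)" for s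
    using DERIV_cdivide[OF DERIV_diff[OF Psi_add_has_derivative Psi_diff_has_derivative], where c=2]
    by simp
  have d\<sigma>: "(\<sigma> has_real_derivative
      inverse (\<psi> (\<sigma> s)) * ((\<psi> (b + s) + \<psi> (a - s)) / 2)) (at s)" for s
    unfolding \<sigma>_def by (rule DERIV_chain2[OF Pinv_has_derivative dm])
  have slope: "1 \<le> inverse (\<psi> (\<sigma> s)) * ((\<psi> (b + s) + \<psi> (a - s)) / 2)" for s
  proof -
    have "\<psi> (\<sigma> s) = J ((Psi (b + s) + - Psi (a - s)) / 2)" by (metis J_Psi Psi_Pinv \<sigma>_def diff_conv_add_uminus)
    also have "\<dots> \<le> (\<psi> (b + s) + \<psi> (a - s)) / 2"
      using J_midpoint[of "Psi (b + s)" "- Psi (a - s)"] by (simp add: J_Psi J_minus_Psi)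
    finally show ?thesis using psi_pos[of "\<sigma> s"] by (simp add: field_simps)
  qed
  have "(\<lambda>s. \<sigma> s - s) 0 \<le> (\<lambda>s. \<sigma> s - s) r"
  proof (rule DERIV_nonneg_imp_increasing_open[OF assms])
    fix z show "\<exists>y. ((\<lambda>s. \<sigma> s - s) has_real_derivative y) (at z) \<and> 0 \<le> y"
      by (rule exI, rule conjI, rule DERIV_diff[OF d\<sigma> DERIV_ident]) (use slope[of z] in simp)
  qed (intro continuous_at_imp_continuous_on ballI continuous_intros DERIV_isCont[OF d\<sigma>])
  then have "Psi (\<sigma> 0 + r) \<le> Psi (\<sigma> r)" by simp
  then show ?thesis by (simp add: \<sigma>_def)
qed

lemma Psi_increment_mono:
  assumes "0 \<le> c" "c \<le> c'" "r \<ge> 0"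
  shows "Psi (c + r) - Psi c \<le> Psi (c' + r) - Psi c'"
proof -
  have "(\<lambda>x. Psi (r + x) - Psi x) c \<le> (\<lambda>x. Psi (r + x) - Psi x) c'"
  proof (rule DERIV_nonneg_imp_increasing_open[OF assms(2)])
    fix z assume "c < z" "z < c'"
    then have "0 \<le> \<psi> (r + z) - \<psi> z" using psi_mono_nonneg[of z "r + z"] assms by simp
    then show "\<exists>y. ((\<lambda>x. Psi (r + x) - Psi x) has_real_derivative y) (at z) \<and> 0 \<le> y"
      using DERIV_diff[OF Psi_add_has_derivative Psi_has_derivative] by blast
  qed (intro continuous_intros continuous_on_compose2[OF continuous_on_Psi[of UNIV]]
         continuous_on_Psi; auto)
  then show ?thesis by (simp add: add.commute)
qed

lemma Psi_end_gains_ge: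
  assumes "r \<ge> 0" "0 \<le> c" "2 * Psi c \<le> Psi b - Psi a"
  shows "2 * (Psi (c + r) - Psi c) \<le> (Psi (b + r) - Psi b) + (Psi a - Psi (a - r))"
proof -
  define c' where "c' = Pinv ((Psi b - Psi a) / 2)"
  have "2 * Psi c' = Psi b - Psi a" by (simp add: c'_def)
  moreover from this have "c \<le> c'"
    using assms(3) Psi_le_iff[of c c'] by linarith
  then have "Psi (c + r) - Psi c \<le> Psi (c' + r) - Psi c'"
    using assms by (intro Psi_increment_mono) auto
  ultimately show ?thesis using Psi_spread_ge[OF assms(1), of b a] unfolding c'_def[symmetric]
    by argo
qed

definition mu1 :: "real measure" where "mu1 = density lborel (\<lambda>x. ennreal (\<psi> x))"

lemma sets_mu1 [simp, measurable_cong]: "sets mu1 = sets borel" by (simp add: mu1_def)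

lemma nn_integral_psi_eq_emeasure:
  "S \<in> sets borel \<Longrightarrow> (\<integral>\<^sup>+ x\<in>S. ennreal (\<psi> x) \<partial>lborel) = emeasure mu1 S"
  unfolding mu1_def using borel_measurable_continuous_onI[OF psi_cont]
  by (subst emeasure_density) auto

lemma emeasure_mu1_interval:
  assumes "u \<le> v"
  shows "emeasure mu1 {u..v} = ennreal (Psi v - Psi u)"
    and "emeasure mu1 {u<..<v} = ennreal (Psi v - Psi u)"
proof -
  have I: "(\<psi> has_integral (Psi v - Psi u)) {u..v}"
    using Psi_has_derivative
    by (intro fundamental_theorem_of_calculus[OF assms])
      (auto intro: has_field_derivative_at_within
        simp: has_real_derivative_iff_has_vector_derivative[symmetric])
  have *: "emeasure mu1 S = ennreal (Psi v - Psi u)"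
    if S: "S \<in> sets borel" "(\<psi> has_integral (Psi v - Psi u)) S" for S
  proof -
    have "emeasure mu1 S = (\<integral>\<^sup>+ x. ennreal (\<psi> x * indicator S x) \<partial>lborel)"
      by (simp add: nn_integral_psi_eq_emeasure[OF S(1), symmetric] nn_integral_set_ennreal)
    also have "\<dots> = ennreal (Psi v - Psi u)"
    proof (rule nn_integral_has_integral_lborel)
      have "(\<lambda>x. \<psi> x * indicator S x) = (\<lambda>x. if x \<in> S then \<psi> x else 0)"
        by (auto simp: indicator_def)
      then show "((\<lambda>x. \<psi> x * indicator S x) has_integral Psi v - Psi u) UNIV"
        using S(2) has_integral_restrict_UNIV[of S \<psi>] by simp
      show "0 \<le> \<psi> x * indicator S x" for x
        using psi_pos[of x] by (simp split: split_indicator)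
    qed (use borel_measurable_continuous_onI[OF psi_cont] S(1) in measurable)
    finally show ?thesis .
  qed
  show "emeasure mu1 {u..v} = ennreal (Psi v - Psi u)" using I by (intro *) auto
  show "emeasure mu1 {u<..<v} = ennreal (Psi v - Psi u)"
    using I has_integral_Icc_iff_Ioo by (intro *) auto
qed

lemma sym1_infinite: "S \<in> sets borel \<Longrightarrow> emeasure mu1 S = \<infinity> \<Longrightarrow> sym1 \<psi> S = UNIV"
  by (simp add: sym1_def nn_integral_psi_eq_emeasure)

lemma sym1_finite:
  assumes S: "S \<in> sets borel" and fin: "emeasure mu1 S \<noteq> \<infinity>"
  obtains c where "c \<ge> 0" "emeasure mu1 S = ennreal (2 * Psi c)" "sym1 \<psi> S = {-c<..<c}"
proof -
  have sym: "emeasure mu1 {-c<..<c} = ennreal (2 * Psi c)" if "0 \<le> c" for c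
    using that by (subst emeasure_mu1_interval(2)) (auto simp: Psi_minus)
  define c where "c = Pinv (enn2real (emeasure mu1 S) / 2)"
  have c: "c \<ge> 0" "emeasure mu1 S = ennreal (2 * Psi c)"
    using fin Psi_le_iff[of 0 c] by (auto simp: c_def ennreal_enn2real_if)
  have "(THE c'. c' \<ge> 0 \<and> (\<integral>\<^sup>+ x\<in>{-c'<..<c'}. ennreal (\<psi> x) \<partial>lborel)
                          = (\<integral>\<^sup>+ x\<in>S. ennreal (\<psi> x) \<partial>lborel)) = c"
  proof (rule the_equality)
    fix c' assume "c' \<ge> 0 \<and> (\<integral>\<^sup>+ x\<in>{-c'<..<c'}. ennreal (\<psi> x) \<partial>lborel)
                                = (\<integral>\<^sup>+ x\<in>S. ennreal (\<psi> x) \<partial>lborel)"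
    then have "c' \<ge> 0" "ennreal (2 * Psi c') = ennreal (2 * Psi c)"
      by (auto simp: nn_integral_psi_eq_emeasure S sym c)
    then show "c' = c" using Psi_nonneg c(1) by (subst (asm) ennreal_inj) auto
  qed (use c in \<open>simp add: nn_integral_psi_eq_emeasure S sym\<close>)
  then have "sym1 \<psi> S = {-c<..<c}"
    using fin by (simp add: sym1_def Let_def nn_integral_psi_eq_emeasure S)
  with c that show ?thesis by blast
qed

lemma emeasure_mu1_thickening_bounded:
  assumes A: "A \<in> sets borel" and ne: "A \<noteq> {}" and bdd: "bdd_below A" "bdd_above A"
    and B: "B \<in> sets borel" and r: "r > 0"
    and thick: "\<And>t s. t \<in> A \<Longrightarrow> \<bar>s - t\<bar> < r \<Longrightarrow> s \<in> B"
    and c: "c \<ge> 0" and mA: "ennreal (2 * Psi c) \<le> emeasure mu1 A"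
  shows "ennreal (2 * Psi (c + r)) \<le> emeasure mu1 B"
proof -
  define a b where "a = Inf A" and "b = Sup A"
  define L R where "L = {a - r<..<a}" and "R = {b<..<b + r}"
  have Aab: "A \<subseteq> {a..b}" using bdd by (auto simp: a_def b_def intro: cInf_lower cSup_upper)
  with ne have ab: "a \<le> b" by auto
  have "ennreal (2 * Psi c) \<le> ennreal (Psi b - Psi a)"
    using mA emeasure_mono[OF Aab, of mu1] emeasure_mu1_interval(1)[OF ab] by simp
  then have "2 * Psi c \<le> Psi b - Psi a" using ab by (simp add: ennreal_le_iff)
  then have "2 * (Psi (c + r) - Psi c) \<le> (Psi (b + r) - Psi b) + (Psi a - Psi (a - r))"
    using r c by (intro Psi_end_gains_ge) auto
  then have gain: "2 * Psi (c + r) \<le> 2 * Psi c + (Psi a - Psi (a - r)) + (Psi (b + r) - Psi b)"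
    by argo
  have disj: "A \<inter> L = {}" "(A \<union> L) \<inter> R = {}" using Aab ab by (auto simp: L_def R_def)
  have "ennreal (2 * Psi (c + r))
      \<le> ennreal (2 * Psi c + (Psi a - Psi (a - r)) + (Psi (b + r) - Psi b))"
    using gain by (rule ennreal_leI)
  also have "\<dots> = ennreal (2 * Psi c) + ennreal (Psi a - Psi (a - r)) + ennreal (Psi (b + r) - Psi b)"
    using Psi_nonneg[OF c] r ab by (simp add: ennreal_plus)
  also have "\<dots> \<le> emeasure mu1 A + emeasure mu1 L + emeasure mu1 R"
    using mA r by (simp add: L_def R_def emeasure_mu1_interval(2) add_right_mono)
  also have "\<dots> = emeasure mu1 (A \<union> L \<union> R)"
    using A disj by (simp add: plus_emeasure L_def R_def)
  also have "\<dots> \<le> emeasure mu1 B"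
    using B thickening_contains_end_intervals[OF ne bdd thick] thick[of _ _] r
    by (intro emeasure_mono) (auto simp: L_def R_def a_def b_def)
  finally show ?thesis .
qed

lemma sym1_thickening:
  assumes A: "A \<in> sets borel" and B: "B \<in> sets borel" and r: "r > 0"
    and thick: "\<And>t s. t \<in> A \<Longrightarrow> \<bar>s - t\<bar> < r \<Longrightarrow> s \<in> B"
    and x: "x \<in> sym1 \<psi> A" and y: "\<bar>y - x\<bar> < r"
  shows "y \<in> sym1 \<psi> B"
proof (cases "emeasure mu1 B = \<infinity>")
  case True
  then show ?thesis using sym1_infinite[OF B] by simp
next
  case False
  obtain cB where cB: "cB \<ge> 0" "emeasure mu1 B = ennreal (2 * Psi cB)" "sym1 \<psi> B = {-cB<..<cB}"
    using sym1_finite[OF B False] by blast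
  have "A \<subseteq> B" using thick r by force
  then have "emeasure mu1 A \<noteq> \<infinity>"
    using emeasure_mono[of A B mu1] B False by (auto simp: top_unique)
  then obtain cA where cA: "cA \<ge> 0" "emeasure mu1 A = ennreal (2 * Psi cA)" "sym1 \<psi> A = {-cA<..<cA}"
    using sym1_finite[OF A] by blast
  have "\<bar>x\<bar> < cA" using x cA(3) by auto
  then have "ennreal (2 * Psi \<bar>x\<bar>) < emeasure mu1 A"
    unfolding cA(2) using Psi_less_iff[of 0 cA] by (intro ennreal_lessI) auto
  then obtain n :: nat where n: "ennreal (2 * Psi \<bar>x\<bar>) < emeasure mu1 (A \<inter> {-real n..real n})"
    using emeasure_Int_Icc_exceeds[OF sets_mu1 A] by blast
  then have "A \<inter> {-real n..real n} \<noteq> {}" by (auto simp del: ennreal_less_zero_iff)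
  then have "ennreal (2 * Psi (\<bar>x\<bar> + r)) \<le> emeasure mu1 B"
    using A B n thick r by (intro emeasure_mu1_thickening_bounded[where A="A \<inter> {-real n..real n}"])
      (auto intro: bdd_belowI[of _ "-real n"] bdd_aboveI[of _ "real n"])
  then have "\<bar>x\<bar> + r \<le> cB"
    unfolding cB(2) using Psi_nonneg[OF cB(1)] by (simp add: ennreal_le_iff)
  with y cB(3) show ?thesis by auto
qed

lemma ball_subset_steiner_sym:
  fixes M N :: "(real \<times> 'b::metric_space) set"
  assumes "open M" "open N" and balls: "\<And>m. m \<in> M \<Longrightarrow> ball m d \<subseteq> N"
    and p: "p \<in> steiner_sym \<psi> M"
  shows "ball p d \<subseteq> steiner_sym \<psi> N"
proof
  fix q assume q: "q \<in> ball p d"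
  obtain x1 x' y1 y' where pq: "p = (x1, x')" "q = (y1, y')" by (cases p, cases q)
  define h where "h = dist x' y'"
  have d: "d > 0" using q le_less_trans[OF zero_le_dist] by (simp add: pq)
  have dist_lt: "dist (t, x') (s, y') < d \<longleftrightarrow> (dist t s)\<^sup>2 + h\<^sup>2 < d\<^sup>2" for t s
    using d by (simp add: dist_Pair_Pair h_def real_sqrt_less_iff[of _ "d\<^sup>2", symmetric])
  define r where "r = sqrt (d\<^sup>2 - h\<^sup>2)"
  have lt: "(dist x1 y1)\<^sup>2 + h\<^sup>2 < d\<^sup>2" unfolding dist_lt[symmetric] using q by (simp add: pq)
  then have "h\<^sup>2 < d\<^sup>2" using zero_le_power2[of "dist x1 y1"] by linarith
  then have r: "r > 0" "r\<^sup>2 = d\<^sup>2 - h\<^sup>2" by (auto simp: r_def)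
  have "(dist x1 y1)\<^sup>2 < r\<^sup>2" using lt r(2) by linarith
  then have y1: "\<bar>y1 - x1\<bar> < r"
    using power2_less_imp_less[OF _ less_imp_le[OF r(1)]] by (simp add: dist_real_def abs_minus_commute)
  have thick: "s \<in> {t. (t, y') \<in> N}" if "t \<in> {t. (t, x') \<in> M}" "\<bar>s - t\<bar> < r" for s t
  proof -
    have "dist t s < r" using that(2) by (simp add: dist_real_def abs_minus_commute)
    then have "(dist t s)\<^sup>2 < r\<^sup>2" by (intro power_strict_mono) auto
    then have "(dist t s)\<^sup>2 + h\<^sup>2 < d\<^sup>2" using r(2) by linarith
    then have "(s, y') \<in> ball (t, x') d" unfolding mem_ball dist_lt .
    then show ?thesis using that(1) balls by blast
  qed
  have borel: "{t. (t, x') \<in> M} \<in> sets borel" "{t. (t, y') \<in> N} \<in> sets borel"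
    using assms(1,2) by (auto intro!: borel_open open_slice)
  have x1: "x1 \<in> sym1 \<psi> {t. (t, x') \<in> M}" using p by (simp add: pq steiner_sym_def)
  show "q \<in> steiner_sym \<psi> N"
    using sym1_thickening[OF borel r(1) thick x1 y1] by (simp add: pq steiner_sym_def)
qed

end

theorem corollary2:
  fixes \<psi> :: "real \<Rightarrow> real" and \<rho> :: "'a::euclidean_space \<Rightarrow> real"
    and M N :: "(real \<times> 'a) set"
  assumes psi_cont: "continuous_on UNIV \<psi>"
    and psi_pos: "\<And>x. \<psi> x > 0"
    and psi_even: "\<And>x. \<psi> (- x) = \<psi> x"
    and psi_int: "(\<integral>\<^sup>+ x. ennreal (\<psi> x) \<partial>lborel) = \<infinity>"
    and J_convex: "convex_on UNIV (\<psi> \<circ> inv (\<lambda>x. LBINT t=0..x. \<psi> t))"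
    and rho_cont: "continuous_on UNIV \<rho>"
    and rho_pos: "\<And>y. \<rho> y > 0"
    and "open M" and "open N" and "M \<subseteq> N"
  shows "set_dist_ext M (frontier N)
           \<le> set_dist_ext (steiner_sym \<psi> M) (frontier (steiner_sym \<psi> N))"
proof (rule set_dist_ext_frontier_ge)
  interpret symmetrization_weight \<psi> using psi_cont psi_pos psi_even J_convex by unfold_locales
  fix d p assume "ereal d < set_dist_ext M (frontier N)" and "p \<in> steiner_sym \<psi> M"
  then show "ball p d \<subseteq> steiner_sym \<psi> N"
    using ball_subset_if_less_set_dist_frontier[OF \<open>M \<subseteq> N\<close>]
    by (intro ball_subset_steiner_sym[OF \<open>open M\<close> \<open>open N\<close>])
qed

end
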